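(* Let $\mathbb S[\boldsymbol\kappa]$ be a $k\times k$ unstable-negative feedback such that one of its $(k-1)\times(k-1)$ principal submatrices is Hurwitz-stable. Then $\mathbb S[\boldsymbol\kappa]$ is $D$-Hopf.
   Context: For a reaction network with reactant coefficients $s^j_m$ and stoichiometric matrix $\mathbb S$, a $k$-Child-Selection $\boldsymbol\kappa=(\kappa,E_\kappa,J)$ is a bijection $J:\kappa\to E_\kappa$ between $k$ species and $k$ reactions with $s^{J(m)}_m>0$; its CS-matrix is $\mathbb S[\boldsymbol\kappa]_{ml}=\mathbb S_{m,J(l)}$. Hurwitz-stable: all eigenvalues have negative real part; Hurwitz-unstable: some eigenvalue has positive real part. An unstable core is a Hurwitz-unstable CS-matrix with no Hurwitz-unstable proper principal submatrix; a $k\times k$ unstable core with $\operatorname{sign}\det=(-1)^k$ is an unstable-negative feedback. Inertia: numbers of eigenvalues with negative, positive, zero real part. $A$ is $D$-Hopf if there exist an invertible principal submatrix $A[\kappa]$ and positive diagonal $D_1,D_2$ with $\operatorname{inertia}(A[\kappa]D_1)\ne\operatorname{inertia}(A[\kappa]D_2)$. *)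

theory Defs
  imports "Jordan_Normal_Form.Char_Poly" "Jordan_Normal_Form.DL_Submatrix"
    "HOL-Computational_Algebra.Polynomial"
begin

definition spec :: "real mat \<Rightarrow> complex multiset" where
  "spec A = proots (char_poly (map_mat complex_of_real A))"

definition hurwitz_stable :: "real mat \<Rightarrow> bool" where
  "hurwitz_stable A \<longleftrightarrow> (\<forall>z \<in># spec A. Re z < 0)"

definition hurwitz_unstable :: "real mat \<Rightarrow> bool" where
  "hurwitz_unstable A \<longleftrightarrow> (\<exists>z \<in># spec A. Re z > 0)"

definition inertia :: "real mat \<Rightarrow> nat \<times> nat \<times> nat" where
  "inertia A = (size (filter_mset (\<lambda>z. Re z < 0) (spec A)),
                size (filter_mset (\<lambda>z. Re z > 0) (spec A)),
                size (filter_mset (\<lambda>z. Re z = 0) (spec A)))"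

definition principal_sub :: "real mat \<Rightarrow> nat set \<Rightarrow> real mat" where
  "principal_sub A I = submatrix A I I"

definition unstable_core :: "real mat \<Rightarrow> bool" where
  "unstable_core A \<longleftrightarrow> square_mat A \<and> hurwitz_unstable A \<and>
     (\<forall>I. I \<subset> {0..<dim_row A} \<longrightarrow> \<not> hurwitz_unstable (principal_sub A I))"

definition unstable_negative_feedback :: "real mat \<Rightarrow> bool" where
  "unstable_negative_feedback A \<longleftrightarrow> unstable_core A \<and>
     sgn (det A) = (-1) ^ dim_row A"

definition pos_diag :: "nat \<Rightarrow> real mat \<Rightarrow> bool" where
  "pos_diag n D \<longleftrightarrow> D \<in> carrier_mat n n \<and> diagonal_mat D \<and> (\<forall>i<n. D $$ (i,i) > 0)"

definition D_Hopf :: "real mat \<Rightarrow> bool" where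
  "D_Hopf A \<longleftrightarrow> (\<exists>I \<subseteq> {0..<dim_row A}. \<exists>D1 D2.
     invertible_mat (principal_sub A I) \<and>
     pos_diag (card I) D1 \<and> pos_diag (card I) D2 \<and>
     inertia (principal_sub A I * D1) \<noteq> inertia (principal_sub A I * D2))"

text \<open>Reaction network with species 0..<n and reactions 0..<r, reactant coefficients
 s (n x r, nonnegative), product coefficients p (nonnegative), stoichiometric matrix
 S = p - s.\<close>

definition child_selection ::
  "real mat \<Rightarrow> nat \<Rightarrow> nat set \<Rightarrow> nat set \<Rightarrow> (nat \<Rightarrow> nat) \<Rightarrow> bool" where
  "child_selection s k \<kappa> E J \<longleftrightarrow> \<kappa> \<subseteq> {0..<dim_row s} \<and> E \<subseteq> {0..<dim_col s} \<and>
     card \<kappa> = k \<and> bij_betw J \<kappa> E \<and> (\<forall>m\<in>\<kappa>. s $$ (m, J m) > 0)"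

definition CS_matrix :: "real mat \<Rightarrow> nat set \<Rightarrow> (nat \<Rightarrow> nat) \<Rightarrow> real mat" where
  "CS_matrix S \<kappa> J = mat (card \<kappa>) (card \<kappa>) (\<lambda>(i,j). S $$ (pick \<kappa> i, J (pick \<kappa> j)))"

end

theory Submission
  imports Defs "HOL-Analysis.Topology_Euclidean_Space"
begin

text \<open>Let j be an index whose deletion from A leaves the Hurwitz-stable principal submatrix B,
and scale column j of A by t > 0, i.e. pass to A D with D = diag(1,..,t,..,1). The
characteristic polynomial becomes t chi_A(\<lambda>) + (1 - t) \<lambda> chi_B(\<lambda>). As t tends to 0,
its roots tend to 0 and to the roots of chi_B, which lie in the open left half-plane; the root
near 0 behaves like -t chi_A(0) / chi_B(0), where chi_A(0) = (-1)^k det A > 0 by the sign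
hypothesis and chi_B(0) > 0 by stability of B. So A D is Hurwitz-stable for small t, while
A = A I has an eigenvalue in the open right half-plane: the inertias of A I and A D differ.\<close>

lemma pick_atLeastLessThan:
  assumes "i < k"
  shows "pick {0..<k} i = i"
  using pick_reduce_set[of i k UNIV] assms by (simp add: pick_UNIV atLeast0LessThan lessThan_def)

lemma pick_atLeastLessThan_remove:
  assumes "j < k" "i < k - 1"
  shows "pick ({0..<k} - {j}) i = insert_index j i"
proof -
  let ?S = "{0..<k} - {j}"
  have card_S: "card ?S = k - 1" using assms by auto
  define x where "x = pick ?S i"
  have "x \<in> ?S" unfolding x_def by (rule pick_in_set_le) (use card_S assms in simp)
  have "card {a\<in>?S. a < x} = i" unfolding x_def by (rule card_pick_le) (use card_S assms in simp)
  moreover have "{a\<in>?S. a < x} = {0..<x} - {j}" using \<open>x \<in> ?S\<close> by auto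
  ultimately have card_below_x: "card ({0..<x} - {j}) = i" by simp
  show ?thesis
  proof (cases "j < x")
    case True
    then have "x = Suc i" using card_below_x by simp
    with True show ?thesis unfolding x_def[symmetric] insert_index_def by simp
  next
    case False
    with \<open>x \<in> ?S\<close> have "x = i" "i < j" using card_below_x by auto
    then show ?thesis unfolding x_def[symmetric] insert_index_def by simp
  qed
qed

lemma principal_sub_carrier_index:
  assumes A: "A \<in> carrier_mat k k" and I: "I \<subseteq> {0..<k}"
  shows "principal_sub A I \<in> carrier_mat (card I) (card I)"
    and "a < card I \<Longrightarrow> b < card I \<Longrightarrow>
      principal_sub A I $$ (a,b) = A $$ (pick I a, pick I b)"
proof -
  have rows: "{i. i < dim_row A \<and> i \<in> I} = I" and cols: "{i. i < dim_col A \<and> i \<in> I} = I"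
    using A I by auto
  show "principal_sub A I \<in> carrier_mat (card I) (card I)"
    by (rule carrier_matI) (simp_all only: principal_sub_def dim_submatrix rows cols)
  show "principal_sub A I $$ (a,b) = A $$ (pick I a, pick I b)" if "a < card I" "b < card I"
    unfolding principal_sub_def by (rule submatrix_index) (use that in \<open>simp_all only: rows cols\<close>)
qed

lemma principal_sub_atLeastLessThan:
  assumes A: "A \<in> carrier_mat k k"
  shows "principal_sub A {0..<k} = A"
proof (rule eq_matI)
  fix a b assume "a < dim_row A" "b < dim_col A"
  then show "principal_sub A {0..<k} $$ (a,b) = A $$ (a,b)"
    using A by (simp add: principal_sub_carrier_index(2)[OF A subset_refl] pick_atLeastLessThan)
qed (use principal_sub_carrier_index(1)[OF A subset_refl] A in auto)

lemma principal_sub_remove: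
  assumes A: "A \<in> carrier_mat k k" and j: "j < k"
  shows "principal_sub A ({0..<k} - {j}) = mat_delete A j j"
proof (rule eq_matI)
  have card: "card ({0..<k} - {j}) = k - 1" using j by simp
  fix a b assume "a < dim_row (mat_delete A j j)" "b < dim_col (mat_delete A j j)"
  then have "a < k - 1" "b < k - 1" using A by auto
  then show "principal_sub A ({0..<k} - {j}) $$ (a,b) = mat_delete A j j $$ (a,b)"
    using A j by (simp add: principal_sub_carrier_index(2)[OF A Diff_subset] card
        pick_atLeastLessThan_remove mat_delete_def)
qed (use principal_sub_carrier_index(1)[OF A Diff_subset, of "{j}"] A j in auto)

lemma subset_card_minus_one_obtains_remove:
  assumes "finite S" "I \<subseteq> S" "card I = card S - 1" "S \<noteq> {}"
  obtains j where "j \<in> S" "I = S - {j}"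
proof -
  have "0 < card S" using assms(1,4) by (simp add: card_gt_0_iff)
  then have "I \<noteq> S" using assms(3) by auto
  then obtain j where j: "j \<in> S" "j \<notin> I" using assms(2) by blast
  have "I = S - {j}"
    by (rule card_subset_eq) (use assms j in auto)
  with j(1) show thesis by (rule that)
qed

definition column_scaling :: "nat \<Rightarrow> nat \<Rightarrow> 'a::{zero,one} \<Rightarrow> 'a mat" where
  "column_scaling k j t = mat_diag k (\<lambda>i. if i = j then t else 1)"

lemma pos_diag_column_scaling: "0 < t \<Longrightarrow> pos_diag k (column_scaling k j t)"
  unfolding pos_diag_def diagonal_mat_def column_scaling_def mat_diag_def by auto

lemma det_column_combination:
  fixes M M1 M2 :: "'a::comm_ring_1 mat"
  assumes M: "M \<in> carrier_mat n n" and M1: "M1 \<in> carrier_mat n n" and M2: "M2 \<in> carrier_mat n n"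
    and j: "j < n"
    and other_cols: "\<And>i l. i < n \<Longrightarrow> l < n \<Longrightarrow> l \<noteq> j \<Longrightarrow>
      M1 $$ (i,l) = M $$ (i,l) \<and> M2 $$ (i,l) = M $$ (i,l)"
    and col_j: "\<And>i. i < n \<Longrightarrow> M $$ (i,j) = a * M1 $$ (i,j) + b * M2 $$ (i,j)"
  shows "det M = a * det M1 + b * det M2"
proof -
  have cofactors: "cofactor M1 i j = cofactor M i j \<and> cofactor M2 i j = cofactor M i j"
    if "i < n" for i
  proof -
    have "mat_delete M1 i j = mat_delete M i j \<and> mat_delete M2 i j = mat_delete M i j"
      using M M1 M2 that j other_cols by (auto simp: mat_delete_def)
    then show ?thesis unfolding cofactor_def by simp
  qed
  have "det M = (\<Sum>i<n. M $$ (i,j) * cofactor M i j)"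
    by (rule laplace_expansion_column[OF M j])
  also have "\<dots> = (\<Sum>i<n. a * (M1 $$ (i,j) * cofactor M1 i j) + b * (M2 $$ (i,j) * cofactor M2 i j))"
    by (rule sum.cong) (auto simp: col_j cofactors algebra_simps)
  also have "\<dots> = a * det M1 + b * det M2"
    unfolding sum.distrib sum_distrib_left[symmetric] laplace_expansion_column[OF M1 j, symmetric]
      laplace_expansion_column[OF M2 j, symmetric] ..
  finally show ?thesis .
qed

text \<open>Column j of the characteristic matrix of A D is t times column j of that of A plus
(1 - t) times column j of that of A with column j zeroed: the diagonal entry \<lambda> splits
as t \<lambda> + (1 - t) \<lambda>.\<close>

lemma char_poly_mult_column_scaling:
  fixes A :: "'a::idom mat"
  assumes A: "A \<in> carrier_mat k k" and j: "j < k"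
  shows "char_poly (A * column_scaling k j t)
    = Polynomial.smult t (char_poly A)
      + Polynomial.smult (1 - t) ([:0, 1:] * char_poly (mat_delete A j j))"
proof -
  define M where "M = Matrix.mat k k (\<lambda>(i,l). A $$ (i,l) * (if l = j then t else 1))"
  define A0 where "A0 = Matrix.mat k k (\<lambda>(i,l). if l = j then 0 else A $$ (i,l))"
  have AD: "A * column_scaling k j t = M"
    unfolding column_scaling_def M_def by (rule mat_diag_mult_right[OF A])
  have "det (char_poly_matrix M)
      = [:t:] * det (char_poly_matrix A) + [:1 - t:] * det (char_poly_matrix A0)"
    by (rule det_column_combination[OF _ _ _ j])
      (use A j in \<open>auto simp: char_poly_matrix_def M_def A0_def algebra_simps\<close>)
  moreover have "char_poly A0 = monom 1 1 * char_poly (mat_delete A0 j j)"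
    by (rule char_poly_0_column) (use j in \<open>auto simp: A0_def\<close>)
  moreover have "mat_delete A0 j j = mat_delete A j j"
    using A j by (auto simp: mat_delete_def A0_def)
  ultimately show ?thesis unfolding AD char_poly_def x_as_monom by simp
qed

lemma mem_spec_iff:
  assumes "A \<in> carrier_mat n n"
  shows "z \<in># spec A \<longleftrightarrow> poly (map_poly complex_of_real (char_poly A)) z = 0"
proof -
  have "map_poly complex_of_real (char_poly A) \<noteq> 0"
    using degree_monic_char_poly[OF assms] by auto
  from set_count_proots[OF this] show ?thesis
    unfolding spec_def of_real_hom.char_poly_hom[OF assms] by blast
qed

lemma eigenvalue_norm_le_sum_norm_entries:
  fixes M :: "'a::real_normed_field mat"
  assumes M: "M \<in> carrier_mat n n" and "eigenvalue M z"
  shows "norm z \<le> (\<Sum>i<n. \<Sum>l<n. norm (M $$ (i,l)))"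
proof -
  obtain v where v: "v \<in> carrier_vec n" "v \<noteq> 0\<^sub>v n" "M *\<^sub>v v = z \<cdot>\<^sub>v v"
    using assms unfolding eigenvalue_def eigenvector_def by auto
  obtain i0 where i0: "i0 < n" "vec_index v i0 \<noteq> 0"
    using v(1,2) by (metis carrier_vecD eq_vecI index_zero_vec(1,2))
  \<comment> \<open>Read off the eigen-equation in a row where v has an entry of maximal modulus.\<close>
  define N where "N = Max ((\<lambda>l. norm (vec_index v l)) ` {..<n})"
  have fin: "finite ((\<lambda>l. norm (vec_index v l)) ` {..<n})"
    "(\<lambda>l. norm (vec_index v l)) ` {..<n} \<noteq> {}"
    using i0 by auto
  obtain i where i: "i < n" "norm (vec_index v i) = N"
    using Max_in[OF fin] unfolding N_def by auto
  have le_N: "norm (vec_index v l) \<le> N" if "l < n" for l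
    unfolding N_def using fin that by (intro Max_ge) auto
  have "N > 0" using le_N[OF i0(1)] i0(2) by (meson less_le_trans zero_less_norm_iff)
  have "z * vec_index v i = vec_index (M *\<^sub>v v) i" using v i by simp
  also have "\<dots> = (\<Sum>l<n. M $$ (i,l) * vec_index v l)"
    using M v(1) i by (auto simp: scalar_prod_def lessThan_atLeast0 intro!: sum.cong)
  finally have "norm z * N = norm (\<Sum>l<n. M $$ (i,l) * vec_index v l)" using i(2) by (metis norm_mult)
  also have "\<dots> \<le> (\<Sum>l<n. norm (M $$ (i,l)) * norm (vec_index v l))"
    by (rule order.trans[OF norm_sum]) (simp add: norm_mult)
  also have "\<dots> \<le> (\<Sum>l<n. norm (M $$ (i,l)) * N)"
    by (intro sum_mono mult_left_mono) (auto intro: le_N)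
  also have "\<dots> = (\<Sum>l<n. norm (M $$ (i,l))) * N" by (simp add: sum_distrib_right)
  finally have "norm z \<le> (\<Sum>l<n. norm (M $$ (i,l)))" using \<open>N > 0\<close> by simp
  also have "\<dots> \<le> (\<Sum>i<n. \<Sum>l<n. norm (M $$ (i,l)))"
    by (rule member_le_sum) (use i in \<open>auto intro: sum_nonneg\<close>)
  finally show ?thesis .
qed

lemma mem_spec_norm_le_sum_abs_entries:
  assumes A: "A \<in> carrier_mat n n" and "z \<in># spec A"
  shows "norm z \<le> (\<Sum>i<n. \<Sum>l<n. \<bar>A $$ (i,l)\<bar>)"
proof -
  have A': "map_mat complex_of_real A \<in> carrier_mat n n" using A by simp
  have "eigenvalue (map_mat complex_of_real A) z"
    using assms(2) unfolding eigenvalue_root_char_poly[OF A'] mem_spec_iff[OF A]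
      of_real_hom.char_poly_hom[OF A] .
  from eigenvalue_norm_le_sum_norm_entries[OF A' this] show ?thesis
    using A by simp
qed

lemma hurwitz_unstable_dim_pos:
  assumes A: "A \<in> carrier_mat n n" and "hurwitz_unstable A"
  shows "0 < n"
proof (rule ccontr)
  assume "\<not> 0 < n"
  then have "degree (char_poly A) = 0" "lead_coeff (char_poly A) = 1"
    using degree_monic_char_poly[OF A] by auto
  then have "char_poly A = 1" using degree_0_id[of "char_poly A"] by (simp add: one_pCons)
  moreover obtain z where "z \<in># spec A" using assms(2) unfolding hurwitz_unstable_def by auto
  ultimately show False unfolding mem_spec_iff[OF A] by simp
qed

lemma poly_char_poly_0:
  fixes A :: "'a::field mat"
  assumes A: "A \<in> carrier_mat n n"
  shows "poly (char_poly A) 0 = (-1)^n * det A"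
proof -
  have "poly (char_poly A) 0 = det (- char_matrix A 0)" by (rule char_poly_matrix[OF A])
  also have "- char_matrix A 0 = (-1) \<cdot>\<^sub>m A"
    using A by (auto simp: char_matrix_def)
  finally show ?thesis using A by simp
qed

lemma hurwitz_stable_poly_char_poly_0_pos:
  assumes B: "B \<in> carrier_mat n n" and "hurwitz_stable B"
  shows "0 < poly (char_poly B) 0"
proof -
  let ?p = "char_poly B"
  have no_root: "poly ?p x \<noteq> 0" if "0 \<le> x" for x
  proof
    assume "poly ?p x = 0"
    then have "of_real x \<in># spec B" unfolding mem_spec_iff[OF B] of_real_hom.poly_map_poly by simp
    then show False using assms(2) that unfolding hurwitz_stable_def by force
  qed
  have "lead_coeff ?p = 1" using degree_monic_char_poly[OF B] by simp
  then obtain N where N: "\<And>x. N \<le> x \<Longrightarrow> 1 \<le> poly ?p x"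
    using poly_pinfty_gt_lc[of ?p] by auto
  show ?thesis
  proof (rule ccontr)
    assume "\<not> ?thesis"
    then have "poly ?p 0 < 0" using no_root[of 0] by linarith
    moreover have "0 < poly ?p (max N 1)" using N[of "max N 1"] by simp
    moreover have "0 < max N (1::real)" by simp
    ultimately obtain x where "0 < x" "poly ?p x = 0"
      using poly_IVT_pos[of 0 "max N 1" ?p] by blast
    then show False using no_root by simp
  qed
qed

lemma inertia_neq_if_hurwitz_unstable_stable:
  assumes "hurwitz_unstable A" and "hurwitz_stable B"
  shows "inertia A \<noteq> inertia B"
proof -
  have "size (filter_mset (\<lambda>z. 0 < Re z) (spec A)) \<noteq> 0"
    using assms(1) unfolding hurwitz_unstable_def by auto
  moreover have "size (filter_mset (\<lambda>z. 0 < Re z) (spec B)) = 0"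
    using assms(2) unfolding hurwitz_stable_def by force
  ultimately have "size (filter_mset (\<lambda>z. 0 < Re z) (spec A))
      \<noteq> size (filter_mset (\<lambda>z. 0 < Re z) (spec B))" by linarith
  then show ?thesis unfolding inertia_def by simp
qed

lemma invertible_mat_if_det_nonzero:
  fixes A :: "'a::field mat"
  assumes A: "A \<in> carrier_mat n n" and "det A \<noteq> 0"
  shows "invertible_mat A"
proof -
  have "A \<in> Units (ring_mat TYPE('a) n undefined)" by (rule det_non_zero_imp_unit[OF assms])
  then obtain B where "B \<in> carrier_mat n n" "B * A = 1\<^sub>m n" "A * B = 1\<^sub>m n"
    unfolding Units_def ring_mat_def by auto
  then show ?thesis unfolding invertible_mat_def inverts_mat_def square_mat.simps using A by auto
qed

lemma isCont_Re_pos_near: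
  fixes h :: "'a::metric_space \<Rightarrow> complex"
  assumes "isCont h a" and "0 < Re (h a)"
  obtains \<delta> where "0 < \<delta>" "\<And>z. dist z a < \<delta> \<Longrightarrow> 0 < Re (h z)"
proof -
  have "isCont (\<lambda>z. Re (h z)) a" by (rule continuous_Re[OF assms(1)])
  then obtain \<delta> where "0 < \<delta>"
    and close: "\<And>z. dist z a < \<delta> \<Longrightarrow> dist (Re (h z)) (Re (h a)) < Re (h a)"
    using assms(2) unfolding continuous_at_eps_delta by blast
  show thesis
  proof (rule that[OF \<open>0 < \<delta>\<close>])
    fix z assume "dist z a < \<delta>"
    from close[OF this] show "0 < Re (h z)" by (simp add: dist_real_def abs_less_iff)
  qed
qed

lemma compact_obtains_pos_lower_and_upper_bound:
  fixes u v :: "'a::topological_space \<Rightarrow> real"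
  assumes "compact K" "continuous_on K u" "continuous_on K v" "\<And>z. z \<in> K \<Longrightarrow> 0 < u z"
  obtains m M where "0 < m" "0 \<le> M" "\<And>z. z \<in> K \<Longrightarrow> m \<le> u z \<and> v z \<le> M"
proof (cases "K = {}")
  case False
  obtain x where "x \<in> K" "\<forall>z\<in>K. u x \<le> u z"
    using continuous_attains_inf[OF assms(1) False assms(2)] by blast
  moreover obtain y where "\<forall>z\<in>K. v z \<le> v y"
    using continuous_attains_sup[OF assms(1) False assms(3)] by blast
  ultimately show thesis using assms(4) by (intro that[of "u x" "max 0 (v y)"]) force+
qed (intro that[of 1 0], auto)

text \<open>Near 0 a zero would satisfy (1 - t) z = - t f(z) / g(z), whose right-hand side has negative
real part; away from 0 the term z g(z) dominates t f(z) once t is small.\<close>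

lemma convex_combination_nonzero_in_right_half_disc:
  fixes f g :: "complex \<Rightarrow> complex" and R :: real
  assumes f: "continuous_on UNIV f" and g: "continuous_on UNIV g"
    and g_nonzero: "\<And>z. 0 \<le> Re z \<Longrightarrow> g z \<noteq> 0"
    and pos: "0 < Re (f 0 / g 0)"
  obtains t :: real where "0 < t" "t < 1"
    "\<And>z. 0 \<le> Re z \<Longrightarrow> norm z \<le> R \<Longrightarrow>
      of_real (1 - t) * z * g z + of_real t * f z \<noteq> 0"
proof -
  have "isCont (\<lambda>z. f z / g z) 0"
    using f g g_nonzero by (intro continuous_intros) (auto simp: continuous_on_eq_continuous_at)
  then obtain \<delta> where "0 < \<delta>"
    and near_dist: "\<And>z. dist z 0 < \<delta> \<Longrightarrow> 0 < Re (f z / g z)"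
    using pos isCont_Re_pos_near by blast
  have near: "0 < Re (f z / g z)" if "norm z < \<delta>" for z
    using near_dist[of z] that by simp
  define K where "K = {z. 0 \<le> Re z \<and> \<delta> \<le> norm z \<and> norm z \<le> R}"
  have "bounded K" unfolding K_def bounded_iff by auto
  moreover have "closed K"
    unfolding K_def by (intro closed_Collect_conj closed_Collect_le continuous_intros)
  ultimately have "compact K" by (simp add: compact_eq_bounded_closed)
  moreover have "continuous_on K (\<lambda>z. norm (z * g z))"
    by (intro continuous_intros continuous_on_subset[OF g subset_UNIV])
  moreover have "continuous_on K (\<lambda>z. norm (f z))"
    by (intro continuous_intros continuous_on_subset[OF f subset_UNIV])
  moreover have "0 < norm (z * g z)" if "z \<in> K" for z
    using that \<open>0 < \<delta>\<close> g_nonzero[of z] unfolding K_def by auto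
  ultimately obtain m M where "0 < m" "0 \<le> M"
    and bounds: "\<And>z. z \<in> K \<Longrightarrow> m \<le> norm (z * g z) \<and> norm (f z) \<le> M"
    using compact_obtains_pos_lower_and_upper_bound by blast
  define t where "t = m / (2 * (m + M))"
  have "0 < t" "t < 1" "t * (m + M) = m / 2"
    unfolding t_def using \<open>0 < m\<close> \<open>0 \<le> M\<close> by (auto simp: field_simps)
  show thesis
  proof (rule that[OF \<open>0 < t\<close> \<open>t < 1\<close>], rule notI)
    fix z :: complex
    assume z: "0 \<le> Re z" "norm z \<le> R" and zero: "of_real (1 - t) * z * g z + of_real t * f z = 0"
    show False
    proof (cases "norm z < \<delta>")
      case True
      have "of_real (1 - t) * z = - of_real t * (f z / g z)"
        using zero g_nonzero[OF z(1)] by (auto simp: field_simps)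
      from arg_cong[OF this, of Re] have "(1 - t) * Re z = - t * Re (f z / g z)"
        by (simp del: times_divide_eq_right)
      moreover have "0 < t * Re (f z / g z)" using near[OF True] \<open>0 < t\<close> by simp
      moreover have "0 \<le> (1 - t) * Re z" using \<open>t < 1\<close> z(1) by simp
      ultimately show False by linarith
    next
      case False
      then have "z \<in> K" unfolding K_def using z by auto
      have "(1 - t) * norm (z * g z) = t * norm (f z)"
        using arg_cong[OF zero[unfolded add_eq_0_iff], of norm] \<open>0 < t\<close> \<open>t < 1\<close>
        by (simp add: norm_mult mult.assoc del: of_real_diff)
      moreover have "(1 - t) * m \<le> (1 - t) * norm (z * g z)" "t * norm (f z) \<le> t * M"
        using bounds[OF \<open>z \<in> K\<close>] \<open>0 < t\<close> \<open>t < 1\<close> by auto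
      ultimately show False using \<open>t * (m + M) = m / 2\<close> \<open>0 < m\<close> by (simp add: algebra_simps)
    qed
  qed
qed

lemma hurwitz_stable_mult_column_scaling:
  assumes A: "A \<in> carrier_mat k k" and j: "j < k"
    and B_stable: "hurwitz_stable (mat_delete A j j)" and det_sign: "0 < (-1)^k * det A"
  obtains t where "0 < t" "hurwitz_stable (A * column_scaling k j t)"
proof -
  define B where "B = mat_delete A j j"
  have B: "B \<in> carrier_mat (k - 1) (k - 1)" unfolding B_def by (rule mat_delete_carrier[OF A])
  define f where "f z = poly (map_poly complex_of_real (char_poly A)) z" for z
  define g where "g z = poly (map_poly complex_of_real (char_poly B)) z" for z
  have g_nonzero: "g z \<noteq> 0" if "0 \<le> Re z" for z
    using B_stable that unfolding g_def B_def[symmetric] mem_spec_iff[OF B, symmetric]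
      hurwitz_stable_def by force
  have pos: "0 < Re (f 0 / g 0)"
    using det_sign hurwitz_stable_poly_char_poly_0_pos[OF B B_stable[folded B_def]]
    unfolding f_def g_def of_real_hom.poly_map_poly_0 poly_char_poly_0[OF A]
    by (simp del: of_real_mult of_real_power)
  have f_cont: "continuous_on UNIV f" and g_cont: "continuous_on UNIV g"
    unfolding f_def g_def by (intro continuous_intros)+
  obtain t where "0 < t" "t < 1"
    and no_zero: "\<And>z. 0 \<le> Re z \<Longrightarrow> norm z \<le> (\<Sum>i<k. \<Sum>l<k. \<bar>A $$ (i,l)\<bar>) \<Longrightarrow>
      of_real (1 - t) * z * g z + of_real t * f z \<noteq> 0"
    using convex_combination_nonzero_in_right_half_disc[OF f_cont g_cont g_nonzero pos] by blast
  define M where "M = A * column_scaling k j t"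
  have M: "M \<in> carrier_mat k k" unfolding M_def column_scaling_def using A by simp
  have M_entries: "\<bar>M $$ (i,l)\<bar> \<le> \<bar>A $$ (i,l)\<bar>" if "i < k" "l < k" for i l
    using that A \<open>0 < t\<close> \<open>t < 1\<close>
    by (auto simp: M_def column_scaling_def mat_diag_mult_right[OF A] abs_mult mult_left_le)
  have char_poly_M: "poly (map_poly complex_of_real (char_poly M)) z
      = of_real (1 - t) * z * g z + of_real t * f z" for z
    unfolding M_def char_poly_mult_column_scaling[OF A j] B_def[symmetric] f_def g_def
    by (simp add: of_real_hom.map_poly_hom_add of_real_hom.map_poly_hom_smult
        of_real_hom.map_poly_pCons_hom)
  have "Re z < 0" if "z \<in># spec M" for z
  proof (rule ccontr)
    assume "\<not> Re z < 0"
    have "norm z \<le> (\<Sum>i<k. \<Sum>l<k. \<bar>M $$ (i,l)\<bar>)"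
      by (rule mem_spec_norm_le_sum_abs_entries[OF M that])
    also have "\<dots> \<le> (\<Sum>i<k. \<Sum>l<k. \<bar>A $$ (i,l)\<bar>)"
      by (intro sum_mono M_entries) auto
    finally have "of_real (1 - t) * z * g z + of_real t * f z \<noteq> 0"
      using no_zero \<open>\<not> Re z < 0\<close> by simp
    moreover have "poly (map_poly complex_of_real (char_poly M)) z = 0"
      using that unfolding mem_spec_iff[OF M] .
    ultimately show False unfolding char_poly_M by simp
  qed
  then have "hurwitz_stable M" unfolding hurwitz_stable_def by blast
  with \<open>0 < t\<close> show thesis unfolding M_def by (rule that)
qed

lemma D_Hopf_if_hurwitz_unstable_stable_scaling:
  assumes A: "A \<in> carrier_mat k k" and "invertible_mat A" and "hurwitz_unstable A"
    and "pos_diag k D" and "hurwitz_stable (A * D)"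
  shows "D_Hopf A"
proof -
  have "inertia (A * 1\<^sub>m k) \<noteq> inertia (A * D)"
    using inertia_neq_if_hurwitz_unstable_stable[OF assms(3,5)] A by simp
  moreover have "pos_diag k (1\<^sub>m k)" unfolding pos_diag_def diagonal_mat_def by auto
  ultimately show ?thesis
    unfolding D_Hopf_def using assms principal_sub_atLeastLessThan[OF A]
    by (intro exI[of _ "{0..<k}"] conjI exI[of _ "1\<^sub>m k"] exI[of _ D]) auto
qed

lemma D_Hopf_if_unstable_negative_feedback:
  assumes A: "A \<in> carrier_mat k k" and "unstable_negative_feedback A"
    and "\<exists>I \<subseteq> {0..<k}. card I = k - 1 \<and> hurwitz_stable (principal_sub A I)"
  shows "D_Hopf A"
proof -
  have unstable: "hurwitz_unstable A" and "sgn (det A) = (-1)^k"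
    using assms(2) A unfolding unstable_negative_feedback_def unstable_core_def by auto
  then have det_sign: "0 < (-1)^k * det A"
    by (cases "even k") (auto simp: sgn_if split: if_splits)
  obtain I where "I \<subseteq> {0..<k}" "card I = k - 1" and I_stable: "hurwitz_stable (principal_sub A I)"
    using assms(3) by auto
  moreover have "{0..<k} \<noteq> {}" using hurwitz_unstable_dim_pos[OF A unstable] by simp
  ultimately obtain j where "j < k" "I = {0..<k} - {j}"
    using subset_card_minus_one_obtains_remove[of "{0..<k}" I] by auto
  with I_stable have "hurwitz_stable (mat_delete A j j)" by (simp add: principal_sub_remove[OF A])
  then obtain t where "0 < t" and stable: "hurwitz_stable (A * column_scaling k j t)"
    using hurwitz_stable_mult_column_scaling[OF A \<open>j < k\<close> _ det_sign] by blast
  have "det A \<noteq> 0" using det_sign by auto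
  then have "invertible_mat A" by (rule invertible_mat_if_det_nonzero[OF A])
  with A unstable pos_diag_column_scaling[OF \<open>0 < t\<close>] stable show ?thesis
    by (intro D_Hopf_if_hurwitz_unstable_stable_scaling)
qed

theorem mainTheorem15:
  fixes s p S :: "real mat" and n r k :: nat
    and \<kappa> E :: "nat set" and J :: "nat \<Rightarrow> nat"
  assumes "s \<in> carrier_mat n r" and "p \<in> carrier_mat n r"
    and "\<forall>i<n. \<forall>j<r. s $$ (i,j) \<ge> 0 \<and> p $$ (i,j) \<ge> 0"
    and "S = p - s"
    and "child_selection s k \<kappa> E J"
    and "unstable_negative_feedback (CS_matrix S \<kappa> J)"
    and "\<exists>I \<subseteq> {0..<k}. card I = k - 1 \<and> hurwitz_stable (principal_sub (CS_matrix S \<kappa> J) I)"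
  shows "D_Hopf (CS_matrix S \<kappa> J)"
proof -
  have "CS_matrix S \<kappa> J \<in> carrier_mat k k"
    using assms(5) unfolding CS_matrix_def child_selection_def by simp
  then show ?thesis using assms(6,7) by (rule D_Hopf_if_unstable_negative_feedback)
qed

end
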